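(* For $g\geq1$, the level-2 principal congruence subgroup $\Gamma_2(g)$ is the normal closure in $\mathrm{GL}(g,\mathbb{Z})$ of $F_1$.
   Context: $\Gamma_2(g)$ is the kernel of the reduction homomorphism $\mathrm{GL}(g,\mathbb{Z})\to\mathrm{GL}(g,\mathbb{Z}/2\mathbb{Z})$. $F_1=I_g-2\mathcal{E}_{1,1}$ is the diagonal matrix $\mathrm{diag}(-1,1,\dots,1)$, where $\mathcal{E}_{1,1}$ has $(1,1)$-entry $1$ and all other entries $0$. *)

theory Defs
  imports "Jordan_Normal_Form.Matrix" "HOL-Algebra.Generated_Groups"
begin

definition GLZ :: "nat \<Rightarrow> int mat set" where
  "GLZ g = {A \<in> carrier_mat g g. invertible_mat A}"

definition GLZ_group :: "nat \<Rightarrow> int mat monoid" where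
  "GLZ_group g = \<lparr>carrier = GLZ g, mult = (\<lambda>A B. A * B), one = 1\<^sub>m g\<rparr>"

definition Gamma2 :: "nat \<Rightarrow> int mat set" where
  "Gamma2 g = {A \<in> GLZ g. \<forall>i<g. \<forall>j<g. A $$ (i,j) mod 2 = (1\<^sub>m g :: int mat) $$ (i,j) mod 2}"

text \<open>The elementary matrix E_{1,1} (index 0 in 0-based indexing) and F_1 = I - 2 E_{1,1}.\<close>
definition E11 :: "nat \<Rightarrow> int mat" where
  "E11 g = mat g g (\<lambda>(i,j). if i = 0 \<and> j = 0 then 1 else 0)"

definition F1 :: "nat \<Rightarrow> int mat" where
  "F1 g = 1\<^sub>m g - 2 \<cdot>\<^sub>m E11 g"

definition normal_closure :: "('a, 'b) monoid_scheme \<Rightarrow> 'a set \<Rightarrow> 'a set" where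
  "normal_closure G S = generate G {x \<otimes>\<^bsub>G\<^esub> s \<otimes>\<^bsub>G\<^esub> inv\<^bsub>G\<^esub> x | x s. x \<in> carrier G \<and> s \<in> S}"

end

theory Submission
  imports Defs "Jordan_Normal_Form.Gauss_Jordan_Elimination"
begin

text \<open>Since \<open>\<Gamma>\<^sub>2(g)\<close> is normal and contains \<open>F\<^sub>1\<close>, it contains the normal closure \<open>N\<close> of \<open>F\<^sub>1\<close>.
  Conversely, \<open>N\<close> contains every sign change \<open>I - 2E\<^sub>k\<^sub>k\<close> (a conjugate of \<open>F\<^sub>1\<close> by a
  transposition) and every transvection \<open>I + 2aE\<^sub>i\<^sub>j\<close>, the commutator of \<open>I + aE\<^sub>i\<^sub>j\<close> with the
  sign change at \<open>j\<close>. Multiplying on the left by these negates a row or adds an even multiple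
  of one row to another. A matrix in \<open>\<Gamma>\<^sub>2(g)\<close> has odd diagonal and even off-diagonal entries,
  so in each column two nonzero entries on or below the diagonal differ in absolute value, and
  subtracting twice the smaller one from the larger lowers the sum of absolute values of the
  column. This Euclidean descent, performed column by column, reduces every element of
  \<open>\<Gamma>\<^sub>2(g)\<close> to the identity without leaving \<open>\<Gamma>\<^sub>2(g)\<close>, hence \<open>\<Gamma>\<^sub>2(g) \<subseteq> N\<close>.\<close>

lemma GLZ_eq_Units: "GLZ g = Units (ring_mat TYPE(int) g b)"
proof (rule equalityI; rule subsetI)
  fix A assume "A \<in> GLZ g"
  then obtain B where A: "A \<in> carrier_mat g g" and AB: "A * B = 1\<^sub>m g"
    and BA: "B * A = 1\<^sub>m (dim_row B)"
    unfolding GLZ_def invertible_mat_def inverts_mat_def by auto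
  have "dim_col B = g"
    using arg_cong[OF AB, of dim_col] by simp
  moreover have "dim_row B = g"
    using arg_cong[OF BA, of dim_col] A by simp
  ultimately show "A \<in> Units (ring_mat TYPE(int) g b)"
    using A AB BA unfolding Units_def ring_mat_simps by auto
next
  fix A assume "A \<in> Units (ring_mat TYPE(int) g b)"
  then obtain B where "A \<in> carrier_mat g g" "B \<in> carrier_mat g g" "A * B = 1\<^sub>m g" "B * A = 1\<^sub>m g"
    unfolding Units_def ring_mat_simps by auto
  then show "A \<in> GLZ g"
    unfolding GLZ_def invertible_mat_def inverts_mat_def by auto
qed

lemma GLZ_group_eq_units_of: "GLZ_group g = units_of (ring_mat TYPE(int) g ())"
  by (simp add: GLZ_group_def units_of_def GLZ_eq_Units ring_mat_simps)

lemma group_GLZ_group: "group (GLZ_group g)"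
  unfolding GLZ_group_eq_units_of
  by (rule monoid.units_group) (rule semiring.axioms(2)[OF semiring_mat])

lemma GLZ_group_simps [simp]:
  "carrier (GLZ_group g) = GLZ g"
  "x \<otimes>\<^bsub>GLZ_group g\<^esub> y = x * y"
  "\<one>\<^bsub>GLZ_group g\<^esub> = 1\<^sub>m g"
  by (simp_all add: GLZ_group_def)

lemma GLZ_carrier_mat: "A \<in> GLZ g \<Longrightarrow> A \<in> carrier_mat g g"
  by (simp add: GLZ_def)

lemma GLZ_dim [simp]: "A \<in> GLZ g \<Longrightarrow> dim_row A = g" "A \<in> GLZ g \<Longrightarrow> dim_col A = g"
  by (auto simp: GLZ_def)

lemma (in group) subgroup_cancel_left:
  assumes "subgroup H G" "x \<in> H" "y \<in> carrier G" "x \<otimes> y \<in> H"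
  shows "y \<in> H"
proof -
  interpret H: subgroup H G by fact
  have "y = inv x \<otimes> (x \<otimes> y)"
    using assms by (simp add: inv_solve_left)
  then show ?thesis
    using assms(2,4) by (metis H.m_closed H.m_inv_closed)
qed

lemma (in group) conj_mem_normal_closure:
  "x \<in> carrier G \<Longrightarrow> s \<in> S \<Longrightarrow> x \<otimes> s \<otimes> inv x \<in> normal_closure G S"
  unfolding normal_closure_def by (rule generate.incl) blast

lemma (in group) normal_closure_normal:
  assumes "S \<subseteq> carrier G"
  shows "normal_closure G S \<lhd> G"
  unfolding normal_closure_def
proof (rule normal_generateI)
  show "{x \<otimes> s \<otimes> inv x |x s. x \<in> carrier G \<and> s \<in> S} \<subseteq> carrier G"
    using assms by auto
next
  fix h y
  assume "h \<in> {x \<otimes> s \<otimes> inv x |x s. x \<in> carrier G \<and> s \<in> S}" and y: "y \<in> carrier G"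
  then obtain x s where x: "x \<in> carrier G" and s: "s \<in> S" and h: "h = x \<otimes> s \<otimes> inv x"
    by blast
  have "y \<otimes> h \<otimes> inv y = (y \<otimes> x) \<otimes> s \<otimes> inv (y \<otimes> x)"
    using x y s assms by (auto simp: h inv_mult_group m_assoc)
  moreover have "y \<otimes> x \<in> carrier G"
    using x y by simp
  ultimately show "y \<otimes> h \<otimes> inv y \<in> {x \<otimes> s \<otimes> inv x |x s. x \<in> carrier G \<and> s \<in> S}"
    using s by (intro CollectI exI[of _ "y \<otimes> x"] exI[of _ s]) simp
qed

lemma (in group) normal_closure_minimal:
  assumes "N \<lhd> G" "S \<subseteq> N"
  shows "normal_closure G S \<subseteq> N"
  unfolding normal_closure_def
proof (rule generate_subgroup_incl)
  show "{x \<otimes> s \<otimes> inv x |x s. x \<in> carrier G \<and> s \<in> S} \<subseteq> N"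
    using assms normal.inv_op_closed2 by fastforce
  show "subgroup N G"
    using assms(1) normal_imp_subgroup by blast
qed

definition mat_mod :: "int \<Rightarrow> int mat \<Rightarrow> int mat" where
  "mat_mod m A = map_mat (\<lambda>x. x mod m) A"

lemma mat_mod_mult:
  assumes "dim_col A = dim_row B"
  shows "mat_mod m (A * B) = mat_mod m (mat_mod m A * mat_mod m B)"
proof (rule eq_matI)
  fix i j assume ij: "i < dim_row (mat_mod m (mat_mod m A * mat_mod m B))"
    "j < dim_col (mat_mod m (mat_mod m A * mat_mod m B))"
  have "(\<Sum>l<dim_row B. (A $$ (i,l) mod m) * (B $$ (l,j) mod m)) mod m
      = (\<Sum>l<dim_row B. (A $$ (i,l) mod m) * (B $$ (l,j) mod m) mod m) mod m"
    by (rule mod_sum_eq[symmetric])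
  also have "\<dots> = (\<Sum>l<dim_row B. A $$ (i,l) * B $$ (l,j) mod m) mod m"
    by (simp add: mod_mult_eq)
  also have "\<dots> = (\<Sum>l<dim_row B. A $$ (i,l) * B $$ (l,j)) mod m"
    by (rule mod_sum_eq)
  finally show "mat_mod m (A * B) $$ (i,j) = mat_mod m (mat_mod m A * mat_mod m B) $$ (i,j)"
    using ij assms by (simp add: mat_mod_def scalar_prod_def atLeast0LessThan)
qed (simp_all add: mat_mod_def)

lemma mat_mod_mult_cong:
  assumes "mat_mod m A = mat_mod m A'" "mat_mod m B = mat_mod m B'"
    "dim_col A = dim_row B" "dim_col A' = dim_row B'"
  shows "mat_mod m (A * B) = mat_mod m (A' * B')"
  using assms by (simp add: mat_mod_mult)

lemma mat_mod_2_one_mat [simp]: "mat_mod 2 (1\<^sub>m n) = 1\<^sub>m n"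
  by (rule eq_matI) (simp_all add: mat_mod_def)

lemma Gamma2_iff: "A \<in> Gamma2 g \<longleftrightarrow> A \<in> GLZ g \<and> mat_mod 2 A = 1\<^sub>m g"
proof -
  have "mat_mod 2 A = mat_mod 2 (1\<^sub>m g) \<longleftrightarrow>
      (\<forall>i<g. \<forall>j<g. A $$ (i,j) mod 2 = (1\<^sub>m g :: int mat) $$ (i,j) mod 2)"
    if "A \<in> carrier_mat g g" for A :: "int mat"
    using that by (auto simp: mat_mod_def mat_eq_iff)
  then show ?thesis
    by (auto simp: Gamma2_def GLZ_carrier_mat)
qed

lemma Gamma2_entry_mod_2:
  "A \<in> Gamma2 g \<Longrightarrow> i < g \<Longrightarrow> j < g \<Longrightarrow> A $$ (i,j) mod 2 = (if i = j then 1 else 0)"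
  by (simp add: Gamma2_def)

lemma F1_eq_multrow_mat: "F1 g = multrow_mat g 0 (-1)"
  unfolding F1_def E11_def by (rule eq_matI) auto

lemma multrow_mat_minus_one_square:
  "multrow_mat n k (-1) * multrow_mat n k (-1) = (1\<^sub>m n :: 'a :: ring_1 mat)"
  unfolding multrow_mat[OF multrow_mat_carrier, symmetric] by (rule eq_matI) auto

lemma swaprows_conj_multrow_mat:
  assumes "i < n" "j < n"
  shows "swaprows_mat n i j * multrow_mat n i a * swaprows_mat n i j
    = (multrow_mat n j a :: 'a :: semiring_1 mat)"
proof -
  have "swaprows_mat n i j * multrow_mat n i a * swaprows_mat n i j
      = swaprows_mat n i j * (multrow_mat n i a * swaprows_mat n i j)"
    by (rule assoc_mult_mat[of _ n n _ n _ n]) auto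
  also have "\<dots> = swaprows i j (multrow i a (swaprows_mat n i j))"
    using assms by (simp add: multrow_mat[of _ n n, symmetric] swaprows_mat[of _ n n, symmetric])
  also have "\<dots> = multrow_mat n j a"
    using assms by (intro eq_matI) auto
  finally show ?thesis .
qed

lemma addrow_mat_commutator_multrow_mat:
  assumes "i < n" "j < n" "i \<noteq> j"
  shows "addrow_mat n a i j * multrow_mat n j (-1) * addrow_mat n (-a) i j * multrow_mat n j (-1)
    = (addrow_mat n (2 * a) i j :: 'a :: comm_ring_1 mat)"
proof -
  let ?F = "multrow_mat n j (-1) :: 'a mat"
  have "addrow_mat n a i j * ?F * addrow_mat n (-a) i j * ?F
      = addrow_mat n a i j * (?F * (addrow_mat n (-a) i j * ?F))"
    by (simp add: assoc_mult_mat[of _ n n _ n _ n] mult_carrier_mat[of _ n n _ n])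
  also have "\<dots> = addrow a i j (multrow j (-1) (addrow (-a) i j ?F))"
    using assms by (simp add: addrow_mat[of _ n n, symmetric] multrow_mat[of _ n n, symmetric])
  also have "\<dots> = addrow_mat n (2 * a) i j"
    using assms by (intro eq_matI) (auto simp: algebra_simps)
  finally show ?thesis .
qed

lemma F1_mem_Gamma2: "F1 g \<in> Gamma2 g"
proof -
  have "F1 g \<in> Units (ring_mat TYPE(int) g ())"
    using multrow_mat_minus_one_square[of g 0]
    by (auto simp: Units_def ring_mat_simps F1_eq_multrow_mat)
  moreover have "mat_mod 2 (F1 g) = 1\<^sub>m g"
    by (rule eq_matI) (auto simp: mat_mod_def F1_eq_multrow_mat)
  ultimately show ?thesis
    by (simp add: Gamma2_iff GLZ_eq_Units[of g "()"])
qed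

definition leading_unit_cols :: "nat \<Rightarrow> 'a :: zero_neq_one mat \<Rightarrow> bool" where
  "leading_unit_cols k A \<longleftrightarrow> (\<forall>i<dim_row A. \<forall>c<k. A $$ (i,c) = (if i = c then 1 else 0))"

lemma leading_unit_cols_Suc:
  assumes "leading_unit_cols k A" "\<And>i. i < dim_row A \<Longrightarrow> A $$ (i,k) = (if i = k then 1 else 0)"
  shows "leading_unit_cols (Suc k) A"
  using assms unfolding leading_unit_cols_def by (auto simp: less_Suc_eq)

lemma pivot_dvd_one:
  fixes A B :: "'a :: comm_semiring_1 mat"
  assumes A: "A \<in> carrier_mat n n" and B: "B \<in> carrier_mat n n" and BA: "B * A = 1\<^sub>m n"
    and k: "k < n" and cols: "leading_unit_cols k A"
    and below: "\<And>i. k < i \<Longrightarrow> i < n \<Longrightarrow> A $$ (i,k) = 0"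
  shows "A $$ (k,k) dvd 1"
proof -
  have BA_entry: "(\<Sum>l<n. B $$ (k,l) * A $$ (l,c)) = (if k = c then 1 else 0)" if "c < n" for c
    using arg_cong[OF BA, of "\<lambda>M. M $$ (k,c)"] A B k that
    by (simp add: scalar_prod_def atLeast0LessThan)
  have B_zero: "B $$ (k,c) = 0" if "c < k" for c
  proof -
    have "(\<Sum>l<n. B $$ (k,l) * A $$ (l,c)) = B $$ (k,c)"
      using cols A that k unfolding leading_unit_cols_def
      by (simp add: if_distrib[of "(*) _"] cong: if_cong)
    then show ?thesis
      using BA_entry[of c] that k by simp
  qed
  have "(\<Sum>l<n. B $$ (k,l) * A $$ (l,k)) = (\<Sum>l<n. if l = k then B $$ (k,k) * A $$ (k,k) else 0)"
  proof (rule sum.cong)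
    fix l assume "l \<in> {..<n}"
    then show "B $$ (k,l) * A $$ (l,k) = (if l = k then B $$ (k,k) * A $$ (k,k) else 0)"
      using B_zero below by (cases l k rule: linorder_cases) auto
  qed simp
  also have "\<dots> = B $$ (k,k) * A $$ (k,k)"
    using k by simp
  finally have "B $$ (k,k) * A $$ (k,k) = 1"
    using BA_entry[of k] k by simp
  then show ?thesis
    by (metis dvdI mult.commute)
qed

lemma abs_add_twice_opposite_lt:
  fixes x y :: int
  assumes "0 < \<bar>y\<bar>" "\<bar>y\<bar> < \<bar>x\<bar>"
  shows "\<bar>2 * - (sgn x * sgn y) * y + x\<bar> < \<bar>x\<bar>"
  using assms by (cases x "0::int" rule: linorder_cases; cases y "0::int" rule: linorder_cases) auto

definition col_weight :: "nat \<Rightarrow> int mat \<Rightarrow> nat" where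
  "col_weight k A = (\<Sum>i<dim_row A. nat \<bar>A $$ (i,k)\<bar>)"

context
  fixes g :: nat
begin

interpretation GL: group "GLZ_group g"
  by (rule group_GLZ_group)

lemma GLZ_inv [simp]:
  assumes "A \<in> GLZ g"
  shows "inv\<^bsub>GLZ_group g\<^esub> A \<in> GLZ g" "A * inv\<^bsub>GLZ_group g\<^esub> A = 1\<^sub>m g"
    "inv\<^bsub>GLZ_group g\<^esub> A * A = 1\<^sub>m g"
    "dim_row (inv\<^bsub>GLZ_group g\<^esub> A) = g" "dim_col (inv\<^bsub>GLZ_group g\<^esub> A) = g"
  using assms GL.inv_closed GL.r_inv GL.l_inv by auto

lemma Gamma2_normal: "Gamma2 g \<lhd> GLZ_group g"
  unfolding GL.normal_inv_iff
proof (intro conjI ballI)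
  show "subgroup (Gamma2 g) (GLZ_group g)"
  proof
    fix A B assume A: "A \<in> Gamma2 g" and B: "B \<in> Gamma2 g"
    have "mat_mod 2 (A * B) = mat_mod 2 (1\<^sub>m g * 1\<^sub>m g)"
      by (rule mat_mod_mult_cong) (use A B in \<open>auto simp: Gamma2_iff GLZ_carrier_mat\<close>)
    then show "A \<otimes>\<^bsub>GLZ_group g\<^esub> B \<in> Gamma2 g"
      using A B GL.m_closed by (simp add: Gamma2_iff)
  next
    fix A assume A: "A \<in> Gamma2 g"
    then have "A \<in> GLZ g"
      by (simp add: Gamma2_iff)
    have "mat_mod 2 (1\<^sub>m g * inv\<^bsub>GLZ_group g\<^esub> A) = mat_mod 2 (A * inv\<^bsub>GLZ_group g\<^esub> A)"
      by (rule mat_mod_mult_cong) (use A in \<open>simp_all add: Gamma2_iff\<close>)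
    then show "inv\<^bsub>GLZ_group g\<^esub> A \<in> Gamma2 g"
      using \<open>A \<in> GLZ g\<close> by (simp add: Gamma2_iff GLZ_carrier_mat)
  qed (use GL.one_closed in \<open>auto simp: Gamma2_iff\<close>)
next
  fix X A assume X: "X \<in> carrier (GLZ_group g)" and A: "A \<in> Gamma2 g"
  have "mat_mod 2 (X * A * inv\<^bsub>GLZ_group g\<^esub> X) = mat_mod 2 (X * 1\<^sub>m g * inv\<^bsub>GLZ_group g\<^esub> X)"
    by (intro mat_mod_mult_cong) (use X A in \<open>auto simp: Gamma2_iff GLZ_carrier_mat\<close>)
  then show "X \<otimes>\<^bsub>GLZ_group g\<^esub> A \<otimes>\<^bsub>GLZ_group g\<^esub> inv\<^bsub>GLZ_group g\<^esub> X \<in> Gamma2 g"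
    using X A GL.m_closed by (simp add: Gamma2_iff GLZ_carrier_mat)
qed

abbreviation F1_ncl :: "int mat set" where
  "F1_ncl \<equiv> normal_closure (GLZ_group g) {F1 g}"

lemma F1_mem_GLZ: "F1 g \<in> GLZ g"
  using F1_mem_Gamma2 by (simp add: Gamma2_iff)

lemma F1_ncl_normal: "F1_ncl \<lhd> GLZ_group g"
  by (rule GL.normal_closure_normal) (simp add: F1_mem_GLZ)

lemma F1_ncl_subset_Gamma2: "F1_ncl \<subseteq> Gamma2 g"
  by (rule GL.normal_closure_minimal[OF Gamma2_normal]) (simp add: F1_mem_Gamma2)

lemma mem_F1_ncl_by_left_mult:
  assumes "M \<in> F1_ncl" "A \<in> Gamma2 g" "M * A \<in> Gamma2 g \<Longrightarrow> M * A \<in> F1_ncl"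
  shows "A \<in> F1_ncl"
proof -
  interpret N: subgroup F1_ncl "GLZ_group g"
    using F1_ncl_normal normal_imp_subgroup by blast
  interpret Gamma2: subgroup "Gamma2 g" "GLZ_group g"
    using Gamma2_normal normal_imp_subgroup by blast
  have "M * A \<in> Gamma2 g"
    using assms(1,2) F1_ncl_subset_Gamma2 Gamma2.m_closed by auto
  then show ?thesis
    using assms GL.subgroup_cancel_left[OF N.is_subgroup, of M A] Gamma2.subset by auto
qed

lemma multrow_minus_one_mem_F1_ncl:
  assumes "k < g"
  shows "multrow_mat g k (-1) \<in> F1_ncl"
proof -
  let ?P = "swaprows_mat g 0 k :: int mat"
  have P: "?P \<in> GLZ g"
    using assms by (simp add: GLZ_eq_Units[of g "()"] swaprows_mat_Unit)
  have "inv\<^bsub>GLZ_group g\<^esub> ?P = ?P"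
    using GL.inv_equality[of ?P ?P] P swaprows_mat_inv[of 0 g k] assms by simp
  then have "?P * F1 g * ?P \<in> F1_ncl"
    using GL.conj_mem_normal_closure[of ?P "F1 g" "{F1 g}"] P by simp
  moreover have "?P * F1 g * ?P = multrow_mat g k (-1)"
    using swaprows_conj_multrow_mat[of 0 g k "-1"] assms by (simp add: F1_eq_multrow_mat)
  ultimately show ?thesis
    by simp
qed

lemma addrow_even_mem_F1_ncl:
  assumes "i < g" "j < g" "i \<noteq> j"
  shows "addrow_mat g (2 * a) i j \<in> F1_ncl"
proof -
  interpret N: subgroup F1_ncl "GLZ_group g"
    using F1_ncl_normal normal_imp_subgroup by blast
  let ?T = "addrow_mat g a i j :: int mat" and ?F = "multrow_mat g j (-1) :: int mat"
  have T: "?T \<in> GLZ g"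
    using assms by (simp add: GLZ_eq_Units[of g "()"] addrow_mat_Unit)
  have "addrow_mat g (-a) i j \<in> GLZ g"
    using assms by (simp add: GLZ_eq_Units[of g "()"] addrow_mat_Unit)
  then have "inv\<^bsub>GLZ_group g\<^esub> ?T = addrow_mat g (-a) i j"
    using GL.inv_equality T addrow_mat_inv[of i g j "-a"] assms by simp
  moreover have F: "?F \<in> F1_ncl"
    using multrow_minus_one_mem_F1_ncl assms(2) .
  moreover have "?T * ?F * inv\<^bsub>GLZ_group g\<^esub> ?T \<in> F1_ncl"
    using normal.inv_op_closed2[OF F1_ncl_normal, of ?T ?F] T F by simp
  ultimately have "?T * ?F * addrow_mat g (-a) i j * ?F \<in> F1_ncl"
    using N.m_closed by simp
  then show ?thesis
    using addrow_mat_commutator_multrow_mat[of i g j a] assms by simp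
qed

lemma Gamma2_pivot_abs_one:
  assumes A: "A \<in> Gamma2 g" and k: "k < g" and cols: "leading_unit_cols k A"
    and below: "\<And>i. k < i \<Longrightarrow> i < g \<Longrightarrow> A $$ (i,k) = 0"
  shows "\<bar>A $$ (k,k)\<bar> = 1"
proof -
  have "A \<in> GLZ g"
    using A by (simp add: Gamma2_iff)
  then have "A $$ (k,k) dvd 1"
    using pivot_dvd_one[OF _ _ _ k cols below, of "inv\<^bsub>GLZ_group g\<^esub> A"]
    by (simp add: GLZ_carrier_mat)
  then show ?thesis
    by simp
qed

lemma reduce_column_entry:
  assumes IH: "\<And>B. col_weight k B < col_weight k A \<Longrightarrow> B \<in> Gamma2 g \<Longrightarrow>
      leading_unit_cols k B \<Longrightarrow> B \<in> F1_ncl"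
    and A: "A \<in> Gamma2 g" "leading_unit_cols k A"
    and ij: "i < g" "j < g" "i \<noteq> j" "k \<le> j" "k < g"
    and lt: "0 < \<bar>A $$ (j,k)\<bar>" "\<bar>A $$ (j,k)\<bar> < \<bar>A $$ (i,k)\<bar>"
  shows "A \<in> F1_ncl"
  \<comment> \<open>\<open>k \<le> j\<close> makes row \<open>j\<close> vanish on the first \<open>k\<close> columns, which therefore survive the row operation.\<close>
proof -
  let ?a = "- (sgn (A $$ (i,k)) * sgn (A $$ (j,k)))"
  let ?M = "addrow_mat g (2 * ?a) i j"
  have Ac: "A \<in> carrier_mat g g"
    using A by (simp add: Gamma2_iff GLZ_carrier_mat)
  have MA: "?M * A = addrow (2 * ?a) i j A"
    using addrow_mat[OF Ac ij(2)] by simp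
  show ?thesis
  proof (rule mem_F1_ncl_by_left_mult)
    show "?M \<in> F1_ncl"
      using ij by (intro addrow_even_mem_F1_ncl)
    show "A \<in> Gamma2 g"
      by (rule A)
    assume "?M * A \<in> Gamma2 g"
    moreover have "A $$ (j,c) = 0" if "c < k" for c
      using A(2) ij that Ac unfolding leading_unit_cols_def by auto
    then have "leading_unit_cols k (?M * A)"
      using A(2) Ac ij unfolding MA leading_unit_cols_def by auto
    moreover have "col_weight k (?M * A) < col_weight k A"
      unfolding MA col_weight_def index_mat_addrow(4)
    proof (rule sum_strict_mono_ex1)
      show "\<exists>r\<in>{..<dim_row A}.
          nat \<bar>addrow (2 * ?a) i j A $$ (r,k)\<bar> < nat \<bar>A $$ (r,k)\<bar>"
        using abs_add_twice_opposite_lt[OF lt] Ac ij by (intro bexI[of _ i]) auto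
    qed (use Ac ij less_imp_le[OF abs_add_twice_opposite_lt[OF lt]] in auto)
    ultimately show "?M * A \<in> F1_ncl"
      using IH by blast
  qed
qed

lemma mem_F1_ncl_if_unit_column:
  assumes k: "k < g"
    and next_col: "\<And>B. B \<in> Gamma2 g \<Longrightarrow> leading_unit_cols (Suc k) B \<Longrightarrow> B \<in> F1_ncl"
    and A: "A \<in> Gamma2 g" "leading_unit_cols k A"
    and unit_col: "\<And>i. i < g \<Longrightarrow> i \<noteq> k \<Longrightarrow> A $$ (i,k) = 0"
  shows "A \<in> F1_ncl"
proof -
  have Ac: "A \<in> carrier_mat g g"
    using A(1) by (simp add: Gamma2_iff GLZ_carrier_mat)
  have "\<bar>A $$ (k,k)\<bar> = 1"
    using Gamma2_pivot_abs_one[OF A(1) k A(2)] unit_col by simp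
  then consider "A $$ (k,k) = 1" | "A $$ (k,k) = -1"
    by linarith
  then show ?thesis
  proof cases
    case 1
    then have "leading_unit_cols (Suc k) A"
      using A(2) unit_col Ac by (intro leading_unit_cols_Suc) auto
    then show ?thesis
      using next_col A(1) by blast
  next
    case 2
    let ?M = "multrow_mat g k (-1)"
    have MA: "?M * A = multrow k (-1) A"
      using multrow_mat[OF Ac] by simp
    show ?thesis
    proof (rule mem_F1_ncl_by_left_mult)
      show "?M \<in> F1_ncl"
        using k by (rule multrow_minus_one_mem_F1_ncl)
      show "A \<in> Gamma2 g"
        by (rule A(1))
      have "leading_unit_cols k (?M * A)"
        using A(2) Ac k unfolding MA leading_unit_cols_def by auto
      then have "leading_unit_cols (Suc k) (?M * A)"
        using 2 unit_col Ac k unfolding MA by (intro leading_unit_cols_Suc) auto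
      then show "?M * A \<in> F1_ncl" if "?M * A \<in> Gamma2 g"
        using next_col that by blast
    qed
  qed
qed

lemma mem_F1_ncl_column_step:
  assumes k: "k < g"
    and next_col: "\<And>B. B \<in> Gamma2 g \<Longrightarrow> leading_unit_cols (Suc k) B \<Longrightarrow> B \<in> F1_ncl"
  shows "A \<in> Gamma2 g \<Longrightarrow> leading_unit_cols k A \<Longrightarrow> A \<in> F1_ncl"
proof (induction "col_weight k A" arbitrary: A rule: less_induct)
  case (less A)
  note reduce = reduce_column_entry[OF less.hyps less.prems]
  have pivot_odd: "A $$ (k,k) mod 2 = 1"
    using Gamma2_entry_mod_2[OF less.prems(1) k k] by simp
  have off_even: "A $$ (i,k) mod 2 = 0" if "i < g" "i \<noteq> k" for i
    using Gamma2_entry_mod_2[OF less.prems(1) that(1) k] that(2) by simp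
  consider (below) i where "k < i" "i < g" "A $$ (i,k) \<noteq> 0"
    | (above) i where "i < k" "A $$ (i,k) \<noteq> 0" "\<And>i. k < i \<Longrightarrow> i < g \<Longrightarrow> A $$ (i,k) = 0"
    | (unit_col) "\<And>i. i < g \<Longrightarrow> i \<noteq> k \<Longrightarrow> A $$ (i,k) = 0"
    using k by (metis linorder_neqE_nat order.strict_trans)
  then show ?case
  proof cases
    case (below i)
    have "\<bar>A $$ (i,k)\<bar> \<noteq> \<bar>A $$ (k,k)\<bar>" "A $$ (k,k) \<noteq> 0"
      using pivot_odd off_even[of i] below by (auto simp: abs_eq_iff)
    then consider "\<bar>A $$ (i,k)\<bar> < \<bar>A $$ (k,k)\<bar>" | "\<bar>A $$ (k,k)\<bar> < \<bar>A $$ (i,k)\<bar>"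
      by linarith
    then show ?thesis
    proof cases
      case 1
      then show ?thesis
        using below k by (intro reduce[of k i]) auto
    next
      case 2
      then show ?thesis
        using below k \<open>A $$ (k,k) \<noteq> 0\<close> by (intro reduce[of i k]) auto
    qed
  next
    case (above i)
    \<comment> \<open>Row \<open>i < k\<close> cannot be used to reduce the pivot, but here the pivot is already \<open>\<plusminus>1\<close>.\<close>
    have "\<bar>A $$ (k,k)\<bar> = 1"
      using Gamma2_pivot_abs_one[OF less.prems(1) k less.prems(2)] above(3) by blast
    moreover have "2 \<le> \<bar>A $$ (i,k)\<bar>"
      using off_even[of i] above k by presburger
    ultimately show ?thesis
      using above k by (intro reduce[of i k]) auto
  next
    case unit_col
    then show ?thesis
      using mem_F1_ncl_if_unit_column[OF k next_col less.prems] by blast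
  qed
qed

lemma Gamma2_subset_F1_ncl: "Gamma2 g \<subseteq> F1_ncl"
proof -
  have "A \<in> F1_ncl" if "k \<le> g" "A \<in> Gamma2 g" "leading_unit_cols k A" for k A
    using that
  proof (induction k arbitrary: A rule: inc_induct)
    case base
    then have "A = 1\<^sub>m g"
      by (intro eq_matI) (auto simp: Gamma2_iff leading_unit_cols_def)
    then show ?case
      using normal_imp_subgroup[OF F1_ncl_normal] subgroup.one_closed by force
  next
    case (step k)
    then show ?case
      using mem_F1_ncl_column_step by blast
  qed
  then show ?thesis
    by (auto simp: leading_unit_cols_def)
qed

lemma Gamma2_eq_F1_ncl: "Gamma2 g = F1_ncl"
  using Gamma2_subset_F1_ncl F1_ncl_subset_Gamma2 by blast

end

theorem lemma3p4:
  fixes g :: nat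
  assumes "g \<ge> 1"
  shows "Gamma2 g = normal_closure (GLZ_group g) {F1 g}"
  by (rule Gamma2_eq_F1_ncl)

end
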